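(* Consider $N$ agents $\mathcal{V}=\{1,\dots,N\}$ interacting over a fixed graph in which agent $i$ has the nonempty neighbor set $\mathcal{N}_i$ of cardinality $n_i$. Let $\beta\in[0,1)$ and let $(q_p(k))_{k\ge0}$ be a sequence with values in $\{-1,1\}$. The opinions evolve by $$\theta_i(k+1)=\theta_i(k)+\bigl(1-\theta_i(k)^2\bigr)\Bigl[\beta\bigl(q_p(k)-\theta_i(k)\bigr)+(1-\beta)\frac{1}{n_i}\sum_{j\in\mathcal{N}_i}\bigl(q_j(k)-\theta_i(k)\bigr)\Bigr],$$ with actions $q_j(k)=1$ if $\theta_j(k)>0$ or ($\theta_j(k)=0$ and $q_j(k-1)=1$), and $q_j(k)=-1$ if $\theta_j(k)<0$ or ($\theta_j(k)=0$ and $q_j(k-1)=-1$), and with $\theta_j(0)\in(-1,1)\setminus\{0\}$ for all $j$. Let $A\subset\mathcal{V}$ be a weakly robust polarized cluster, and suppose $q_p(k)=q_i(0)$ for all $k\in\mathbb{N}$ and all $i\in A$. Then $q_i(k)=q_i(0)$ for all $i\in A$ and all $k\in\mathbb{N}$.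
   Context: The neighbor set $\mathcal{N}_i$ consists of the agents $j$ with $(j,i)$ an edge of the graph. A subset $A\subset\mathcal{V}$ is a weakly robust polarized cluster if (i) $q_i(0)=q_j(0)$ for all $i,j\in A$, and (ii) for all $i\in A$, $|\mathcal{N}_i\cap A|\ge|\mathcal{N}_i\setminus A|-\frac{\beta}{1-\beta}|\mathcal{N}_i|$. *)

theory Defs
  imports Complex_Main
begin

definition neighbors :: "(nat \<times> nat) set \<Rightarrow> nat \<Rightarrow> nat set" where
  "neighbors E i = {j. (j, i) \<in> E}"

definition weakly_robust_polarized_cluster ::
  "(nat \<times> nat) set \<Rightarrow> (nat \<Rightarrow> real) \<Rightarrow> real \<Rightarrow> nat set \<Rightarrow> bool" where
  "weakly_robust_polarized_cluster E q0 \<beta> A \<longleftrightarrow>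
     (\<forall>i\<in>A. \<forall>j\<in>A. q0 i = q0 j) \<and>
     (\<forall>i\<in>A. real (card (neighbors E i \<inter> A))
        \<ge> real (card (neighbors E i - A)) - \<beta> / (1 - \<beta>) * real (card (neighbors E i)))"

end

theory Submission
  imports Defs
begin

text \<open>Let s be the common initial action of the cluster A and measure every opinion in A
  by u = s * \<theta>. Then the update of an agent of A reads u' = u + (1 - u^2) (a - u), where a is
  \<beta> (the pull of the stubborn prior, which agrees with s) plus (1 - \<beta>) times the average of
  s q_j over the neighbors. As long as all of A still plays s, the robustness inequality of
  the cluster says exactly that 0 \<le> a \<le> 1, and such an update keeps u in (0, 1).\<close>

lemma update_towards_unit_interval:
  fixes u a :: real
  assumes "0 < u" "u < 1" "0 \<le> a" "a \<le> 1"
  shows "0 < u + (1 - u\<^sup>2) * (a - u)" and "u + (1 - u\<^sup>2) * (a - u) < 1"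
proof -
  have eq: "u + (1 - u\<^sup>2) * (a - u) = u ^ 3 + (1 - u\<^sup>2) * a"
    by (simp add: algebra_simps power2_eq_square power3_eq_cube)
  have "u\<^sup>2 < 1" using assms by (simp add: power_less_one_iff)
  then have "0 \<le> (1 - u\<^sup>2) * a" "(1 - u\<^sup>2) * a \<le> 1 - u\<^sup>2"
    using assms by (simp_all add: mult_left_le)
  moreover have "0 < u ^ 3" "0 < u\<^sup>2 * (1 - u)" using assms by simp_all
  ultimately show "0 < u + (1 - u\<^sup>2) * (a - u)" "u + (1 - u\<^sup>2) * (a - u) < 1"
    unfolding eq by (simp_all add: algebra_simps power2_eq_square power3_eq_cube)
qed

lemma sum_signs_bounds:
  fixes f :: "'a \<Rightarrow> real"
  assumes "finite M" "\<forall>j\<in>M. f j \<in> {-1, 1}" "\<forall>j\<in>M \<inter> A. f j = 1"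
  shows "real (card (M \<inter> A)) - real (card (M - A)) \<le> sum f M"
    and "sum f M \<le> real (card M)"
proof -
  have "sum f M = sum f (M \<inter> A) + sum f (M - A)"
    using sum.Int_Diff[OF assms(1)] .
  moreover have "sum f (M \<inter> A) = real (card (M \<inter> A))"
    using assms(3) by simp
  moreover have "(\<Sum>j\<in>M - A. -1) \<le> sum f (M - A)"
    using assms(2) by (intro sum_mono) force
  ultimately show "real (card (M \<inter> A)) - real (card (M - A)) \<le> sum f M"
    by simp
  have "sum f M \<le> (\<Sum>j\<in>M. 1)"
    using assms(2) by (intro sum_mono) force
  then show "sum f M \<le> real (card M)"
    by simp
qed

lemma cluster_member_update_keeps_sign:
  fixes s t \<beta> :: real and q :: "'a \<Rightarrow> real" and M A :: "'a set"
  assumes s: "s \<in> {-1, 1}" and t: "0 < s * t" "s * t < 1"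
    and M: "finite M" "M \<noteq> {}"
    and q: "\<forall>j\<in>M. q j \<in> {-1, 1}" "\<forall>j\<in>M \<inter> A. q j = s"
    and robust: "real (card (M \<inter> A)) \<ge> real (card (M - A)) - \<beta> / (1 - \<beta>) * real (card M)"
    and \<beta>: "0 \<le> \<beta>" "\<beta> < 1"
  defines "t' \<equiv> t + (1 - t\<^sup>2) *
    (\<beta> * (s - t) + (1 - \<beta>) * (1 / real (card M)) * (\<Sum>j\<in>M. (q j - t)))"
  shows "0 < s * t'" and "s * t' < 1"
proof -
  define n where "n = real (card M)"
  define S where "S = (\<Sum>j\<in>M. s * q j)"
  define u where "u = s * t"
  define a where "a = \<beta> + (1 - \<beta>) / n * S"
  have n: "0 < n" using M unfolding n_def by (simp add: card_gt_0_iff)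
  have ss: "s * s = 1" using s by auto
  have "\<forall>j\<in>M. s * q j \<in> {-1, 1}" "\<forall>j\<in>M \<inter> A. s * q j = 1"
    using q s by (auto simp: ss)
  from sum_signs_bounds[OF M(1) this] robust
  have S_bounds: "- (\<beta> / (1 - \<beta>) * n) \<le> S" "S \<le> n"
    unfolding S_def n_def by simp_all
  have "(1 - \<beta>) / n * (- (\<beta> / (1 - \<beta>) * n)) \<le> (1 - \<beta>) / n * S"
    "(1 - \<beta>) / n * S \<le> (1 - \<beta>) / n * n"
    using S_bounds \<beta> n by (intro mult_left_mono; simp)+
  moreover have "(1 - \<beta>) / n * (- (\<beta> / (1 - \<beta>) * n)) = - \<beta>" "(1 - \<beta>) / n * n = 1 - \<beta>"
    using \<beta> n by simp_all
  ultimately have a: "0 \<le> a" "a \<le> 1"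
    unfolding a_def by linarith+
  have sum_eq: "s * (\<Sum>j\<in>M. (q j - t)) = S - n * u"
    unfolding S_def n_def u_def by (simp add: sum_subtractf sum_distrib_left algebra_simps)
  have t2: "t\<^sup>2 = u\<^sup>2"
    unfolding u_def power_mult_distrib using ss by (simp add: power2_eq_square)
  have "s * t' = s * t + (1 - t\<^sup>2) *
      (\<beta> * (s * s - s * t) + (1 - \<beta>) / n * (s * (\<Sum>j\<in>M. (q j - t))))"
    unfolding t'_def n_def by (simp add: algebra_simps)
  also have "\<dots> = u + (1 - u\<^sup>2) * (a - u)"
    unfolding sum_eq a_def ss t2 u_def[symmetric] using n by (simp add: field_simps)
  finally have "s * t' = u + (1 - u\<^sup>2) * (a - u)" .
  with update_towards_unit_interval[of u a] t a show "0 < s * t'" "s * t' < 1"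
    unfolding u_def by simp_all
qed

lemma sign_action_eq:
  fixes s x y :: real
  assumes "s \<in> {-1, 1}" "0 < s * x"
  shows "(if x > 0 then 1 else if x < 0 then -1 else y) = s"
  using assms by (auto simp: zero_less_mult_iff)

theorem mainTheorem5:
  fixes N :: nat and E :: "(nat \<times> nat) set" and \<beta> :: real
    and qp :: "nat \<Rightarrow> real"
    and \<theta> :: "nat \<Rightarrow> nat \<Rightarrow> real"   (* \<theta> k i = opinion of agent i at time k *)
    and q :: "nat \<Rightarrow> nat \<Rightarrow> real"   (* q k i = action of agent i at time k *)
    and A :: "nat set"
  defines "V \<equiv> {1..N}"
  assumes E_sub: "E \<subseteq> V \<times> V"
    and nbr_ne: "\<forall>i\<in>V. neighbors E i \<noteq> {}"
    and beta: "0 \<le> \<beta>" "\<beta> < 1"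
    and qp_vals: "\<forall>k. qp k \<in> {-1, 1}"
    and init: "\<forall>j\<in>V. \<theta> 0 j \<in> {-1<..<1} \<and> \<theta> 0 j \<noteq> 0"
    and q0: "\<forall>j\<in>V. q 0 j = (if \<theta> 0 j > 0 then 1 else -1)"
    and qrule: "\<forall>k. \<forall>j\<in>V. q (Suc k) j =
        (if \<theta> (Suc k) j > 0 then 1 else if \<theta> (Suc k) j < 0 then -1 else q k j)"
    and dyn: "\<forall>k. \<forall>i\<in>V. \<theta> (Suc k) i = \<theta> k i + (1 - (\<theta> k i)\<^sup>2) *
        (\<beta> * (qp k - \<theta> k i) + (1 - \<beta>) * (1 / real (card (neighbors E i))) *
           (\<Sum>j\<in>neighbors E i. (q k j - \<theta> k i)))"
    and A_sub: "A \<subseteq> V"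
    and cluster: "weakly_robust_polarized_cluster E (q 0) \<beta> A"
    and stubborn: "\<forall>k. \<forall>i\<in>A. qp k = q 0 i"
  shows "\<forall>i\<in>A. \<forall>k. q k i = q 0 i"
proof (cases "A = {}")
  case False
  then obtain s where qA0: "\<forall>i\<in>A. q 0 i = s"
    using cluster unfolding weakly_robust_polarized_cluster_def by blast
  have s: "s \<in> {-1, 1}" using qA0 q0 A_sub False by (metis ex_in_conv insert_iff subsetD)
  have nb_sub: "neighbors E i \<subseteq> V" for i using E_sub unfolding neighbors_def by auto
  have finite_nb: "finite (neighbors E i)" for i
    using nb_sub unfolding V_def by (rule finite_subset) simp
  have q_vals: "\<forall>j\<in>V. q k j \<in> {-1, 1}" for k
    by (induction k) (use q0 qrule in auto)
  have "\<forall>i\<in>A. 0 < s * \<theta> k i \<and> s * \<theta> k i < 1 \<and> q k i = s" for k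
  proof (induction k)
    case 0
    show ?case using qA0 init q0 A_sub by (force split: if_splits)
  next
    case (Suc k)
    show ?case
    proof
      fix i assume i: "i \<in> A"
      then have "i \<in> V" using A_sub by auto
      have robust: "real (card (neighbors E i \<inter> A)) \<ge> real (card (neighbors E i - A))
          - \<beta> / (1 - \<beta>) * real (card (neighbors E i))"
        using cluster i unfolding weakly_robust_polarized_cluster_def by blast
      have "\<forall>j\<in>neighbors E i. q k j \<in> {-1, 1}" "\<forall>j\<in>neighbors E i \<inter> A. q k j = s"
        using q_vals nb_sub Suc.IH by blast+
      note step = cluster_member_update_keeps_sign[OF s _ _ finite_nb _ this robust beta]
      \<comment> \<open>This makes the hypothesis qp_vals redundant.\<close>
      have "qp k = s" using stubborn qA0 i by metis
      then have "0 < s * \<theta> (Suc k) i \<and> s * \<theta> (Suc k) i < 1"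
        using step Suc.IH i nbr_ne dyn \<open>i \<in> V\<close> by simp
      then show "0 < s * \<theta> (Suc k) i \<and> s * \<theta> (Suc k) i < 1 \<and> q (Suc k) i = s"
        using sign_action_eq[OF s] qrule \<open>i \<in> V\<close> by simp
    qed
  qed
  then show ?thesis using qA0 by simp
qed simp

end
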